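(* Let $A,B,C$ be positive semidefinite complex matrices of the same order. Then \[ \det(A+B+C)+\det C\ge \det(A+C)+\det(B+C). \] *)

theory Defs
  imports "HOL-Analysis.Analysis" "HOL-Library.Complex_Order"
begin

definition hermitian_mat :: "complex ^'n ^'n \<Rightarrow> bool" where
  "hermitian_mat A \<longleftrightarrow> (\<forall>i j. A $ i $ j = cnj (A $ j $ i))"

definition psd_mat :: "complex ^'n ^'n \<Rightarrow> bool" where
  "psd_mat A \<longleftrightarrow> hermitian_mat A \<and>
     (\<forall>x :: complex ^'n. (\<Sum>i\<in>UNIV. \<Sum>j\<in>UNIV. cnj (x $ i) * A $ i $ j * x $ j) \<ge> 0)"

end

theory Submission
  imports Defs
begin

text \<open>
  Write each positive semidefinite matrix as a sum of rank-one matrices \<open>v v\<^sup>*\<close> (by repeatedly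
  splitting off one column, as in a Cholesky factorisation), so that \<open>A\<close>, \<open>B\<close>, \<open>C\<close> become
  Gram sums \<open>G K = (\<Sum>k\<in>K. w\<^sub>k w\<^sub>k\<^sup>*)\<close> over disjoint index sets \<open>K\<^sub>A\<close>, \<open>K\<^sub>B\<close>, \<open>K\<^sub>C\<close> of a single
  family \<open>w\<close>. Expanding the determinant row by row gives
  \<open>n! det (G K) = (\<Sum>f : [n] \<rightarrow> K. \<bar>det (w\<^sub>f\<^sub>1, \<dots>, w\<^sub>f\<^sub>n)\<bar>\<^sup>2)\<close>, a sum of nonnegative terms
  over the maps into \<open>K\<close>. Since maps into \<open>S \<inter> T\<close> are exactly those into both \<open>S\<close> and \<open>T\<close>,
  while maps into \<open>S\<close> or into \<open>T\<close> are maps into \<open>S \<union> T\<close>, the set function \<open>K \<mapsto> det (G K)\<close>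
  is supermodular; with \<open>S = K\<^sub>A \<union> K\<^sub>C\<close> and \<open>T = K\<^sub>B \<union> K\<^sub>C\<close> this is the claim.
\<close>

lemma det_rows_sum:
  fixes a :: "'n::finite \<Rightarrow> 'k \<Rightarrow> 'a::comm_ring_1^'n"
  assumes "finite K"
  shows "det (\<chi> i. \<Sum>k\<in>K. a i k) = (\<Sum>f\<in>UNIV \<rightarrow> K. det (\<chi> i. a i (f i)))"
proof -
  have "det (\<chi> i. \<Sum>k\<in>K. a i k)
      = (\<Sum>p | p permutes UNIV. of_int (sign p) * (\<Prod>i\<in>UNIV. \<Sum>k\<in>K. a i k $ p i))"
    by (simp add: det_def)
  also have "\<dots> = (\<Sum>p | p permutes UNIV. \<Sum>f\<in>UNIV \<rightarrow> K.
                     of_int (sign p) * (\<Prod>i\<in>UNIV. a i (f i) $ p i))"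
    by (simp add: prod_sum_PiE assms PiE_UNIV_domain sum_distrib_left)
  also have "\<dots> = (\<Sum>f\<in>UNIV \<rightarrow> K. det (\<chi> i. a i (f i)))"
    by (subst sum.swap) (simp add: det_def)
  finally show ?thesis .
qed

lemma det_cnj_rows: "det (\<chi> i j. cnj (v i $ j)) = cnj (det (\<chi> i. v i :: complex^'n^'n))"
  by (simp add: det_def)

lemma sum_funcset_comp_permutes:
  fixes h :: "('n \<Rightarrow> 'k) \<Rightarrow> 'a::comm_monoid_add"
  assumes "t permutes (UNIV :: 'n set)"
  shows "(\<Sum>f\<in>UNIV \<rightarrow> K. h (f \<circ> t)) = (\<Sum>f\<in>(UNIV::'n set) \<rightarrow> K. h f)"
proof (rule sum.reindex_bij_witness[where i="\<lambda>f. f \<circ> inv t" and j="\<lambda>f. f \<circ> t"])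
  fix f :: "'n \<Rightarrow> 'k" show "f \<circ> inv t \<circ> t = f"
    using permutes_inverses(2)[OF assms] by (auto simp: fun_eq_iff)
next
  fix f :: "'n \<Rightarrow> 'k" show "f \<circ> t \<circ> inv t = f"
    using permutes_inverses(1)[OF assms] by (auto simp: fun_eq_iff)
qed auto

definition outer_prod :: "complex^'n \<Rightarrow> complex^'n^'n" where
  "outer_prod v = (\<chi> i j. v $ i * cnj (v $ j))"

text \<open>Cauchy--Binet for \<open>W W\<^sup>*\<close>, summed over ordered rather than increasing index tuples,
  whence the factor \<open>n!\<close>.\<close>

lemma det_sum_outer_prod:
  fixes w :: "'k \<Rightarrow> complex^'n"
  assumes K: "finite K"
  shows "fact CARD('n) * det (\<Sum>k\<in>K. outer_prod (w k))
       = (\<Sum>f\<in>UNIV \<rightarrow> K. of_real (cmod (det (\<chi> i. w (f i))) ^ 2))"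
proof -
  define P where "P f = (\<Prod>i\<in>UNIV. w (f i) $ i)" for f :: "'n \<Rightarrow> 'k"
  define Q where "Q f = det (\<chi> i. w (f i))" for f :: "'n \<Rightarrow> 'k"
  define S where "S = {t. t permutes (UNIV::'n set)}"
  have "(\<Sum>k\<in>K. outer_prod (w k)) = (\<chi> i. \<Sum>k\<in>K. (w k $ i) *s (\<chi> j. cnj (w k $ j)))"
    by (simp add: vec_eq_iff outer_prod_def)
  then have det_eq: "det (\<Sum>k\<in>K. outer_prod (w k)) = (\<Sum>f\<in>UNIV \<rightarrow> K. P f * cnj (Q f))"
    by (simp add: det_rows_sum[OF K] det_rows_mul P_def Q_def det_cnj_rows)
  have Q_expand: "Q f = (\<Sum>t\<in>S. of_int (sign t) * P (f \<circ> t))" for f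
  proof -
    have "Q f = det (transpose (\<chi> i. w (f i)))" unfolding Q_def by simp
    then show ?thesis unfolding det_def S_def P_def by (simp add: transpose_def)
  qed
  have Q_comp: "Q (f \<circ> t) = of_int (sign t) * Q f" if "t \<in> S" for f t
    using det_permute_rows[of t "\<chi> i. w (f i)"] that by (simp add: Q_def S_def o_def)
  have sign_sq: "(of_int (sign t) :: complex) * of_int (sign t) = 1" for t :: "'n \<Rightarrow> 'n"
    by (metis of_int_1 of_int_mult sign_idempotent)
  have inner: "(\<Sum>f\<in>UNIV \<rightarrow> K. of_int (sign t) * P (f \<circ> t) * cnj (Q f))
             = (\<Sum>f\<in>UNIV \<rightarrow> K. P f * cnj (Q f))" if t: "t \<in> S" for t
  proof -
    have "(\<Sum>f\<in>UNIV \<rightarrow> K. of_int (sign t) * P (f \<circ> t) * cnj (Q f))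
        = (\<Sum>f\<in>UNIV \<rightarrow> K. P (f \<circ> t) * cnj (Q (f \<circ> t)))"
      using Q_comp[OF t] sign_sq[of t] by (intro sum.cong) (simp_all add: algebra_simps)
    also have "\<dots> = (\<Sum>f\<in>UNIV \<rightarrow> K. P f * cnj (Q f))"
      using t by (intro sum_funcset_comp_permutes) (simp add: S_def)
    finally show ?thesis .
  qed
  have "(\<Sum>f\<in>UNIV \<rightarrow> K. Q f * cnj (Q f))
      = (\<Sum>t\<in>S. \<Sum>f\<in>UNIV \<rightarrow> K. of_int (sign t) * P (f \<circ> t) * cnj (Q f))"
    by (subst sum.swap) (simp add: Q_expand sum_distrib_right)
  also have "\<dots> = of_nat (card S) * det (\<Sum>k\<in>K. outer_prod (w k))"
    by (simp add: inner det_eq)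
  also have "card S = fact CARD('n)"
    unfolding S_def by (rule card_permutations) auto
  finally show ?thesis
    by (simp add: Q_def complex_norm_square[symmetric])
qed

lemma det_sum_outer_prod_supermodular:
  fixes w :: "'k \<Rightarrow> complex^'n"
  assumes S: "finite S" and T: "finite T"
  shows "det (\<Sum>k\<in>S. outer_prod (w k)) + det (\<Sum>k\<in>T. outer_prod (w k))
       \<le> det (\<Sum>k\<in>S \<union> T. outer_prod (w k)) + det (\<Sum>k\<in>S \<inter> T. outer_prod (w k))"
proof -
  define g where "g f = cmod (det (\<chi> i. w (f i))) ^ 2" for f :: "'n \<Rightarrow> 'k"
  define r where "r K = (\<Sum>f\<in>UNIV \<rightarrow> K. g f) / fact CARD('n)" for K
  have fin: "finite ((UNIV :: 'n set) \<rightarrow> K)" if "finite K" for K :: "'k set"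
    using finite_PiE[of "UNIV :: 'n set" "\<lambda>_. K"] that by (simp add: PiE_UNIV_domain)
  have det_eq: "det (\<Sum>k\<in>K. outer_prod (w k)) = of_real (r K)" if "finite K" for K
    using det_sum_outer_prod[OF that, of w] by (simp add: r_def g_def field_simps)
  have "(\<Sum>f\<in>UNIV \<rightarrow> S. g f) + (\<Sum>f\<in>UNIV \<rightarrow> T. g f)
      = (\<Sum>f\<in>(UNIV \<rightarrow> S) \<union> (UNIV \<rightarrow> T). g f) + (\<Sum>f\<in>UNIV \<rightarrow> S \<inter> T. g f)"
    using sum.union_inter[OF fin[OF S] fin[OF T], of g] by (simp add: Pi_Int)
  also have "\<dots> \<le> (\<Sum>f\<in>UNIV \<rightarrow> S \<union> T. g f) + (\<Sum>f\<in>UNIV \<rightarrow> S \<inter> T. g f)"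
    using S T by (intro add_right_mono sum_mono2 fin) (auto simp: g_def)
  finally have "r S + r T \<le> r (S \<union> T) + r (S \<inter> T)"
    by (simp add: r_def add_divide_distrib[symmetric] divide_right_mono)
  then show ?thesis
    using S T by (simp add: det_eq less_eq_complex_def)
qed

definition sesq_form :: "complex^'n^'n \<Rightarrow> complex^'n \<Rightarrow> complex^'n \<Rightarrow> complex" where
  "sesq_form A x y = (\<Sum>i\<in>UNIV. \<Sum>j\<in>UNIV. cnj (x $ i) * A $ i $ j * y $ j)"

lemma psd_mat_iff_sesq_form:
  "psd_mat A \<longleftrightarrow> hermitian_mat A \<and> (\<forall>x. sesq_form A x x \<ge> 0)"
  unfolding psd_mat_def sesq_form_def ..

lemma sesq_form_add_left: "sesq_form A (x + y) z = sesq_form A x z + sesq_form A y z"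
  by (simp add: sesq_form_def algebra_simps sum.distrib)

lemma sesq_form_add_right: "sesq_form A z (x + y) = sesq_form A z x + sesq_form A z y"
  by (simp add: sesq_form_def algebra_simps sum.distrib)

lemma sesq_form_diff_left: "sesq_form A (x - y) z = sesq_form A x z - sesq_form A y z"
  by (simp add: sesq_form_def algebra_simps sum_subtractf)

lemma sesq_form_diff_right: "sesq_form A z (x - y) = sesq_form A z x - sesq_form A z y"
  by (simp add: sesq_form_def algebra_simps sum_subtractf)

lemma sesq_form_scale_left: "sesq_form A (c *s x) z = cnj c * sesq_form A x z"
  by (simp add: sesq_form_def algebra_simps sum_distrib_left)

lemma sesq_form_scale_right: "sesq_form A z (c *s x) = c * sesq_form A z x"
  by (simp add: sesq_form_def algebra_simps sum_distrib_left)

lemma sesq_form_diff_mat: "sesq_form (A - B) x y = sesq_form A x y - sesq_form B x y"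
  by (simp add: sesq_form_def algebra_simps sum_subtractf)

lemma sesq_form_outer_prod:
  "sesq_form (outer_prod v) x y = cnj (\<Sum>k\<in>UNIV. cnj (v $ k) * x $ k) * (\<Sum>k\<in>UNIV. cnj (v $ k) * y $ k)"
  by (simp add: sesq_form_def outer_prod_def sum_distrib_left sum_distrib_right algebra_simps)
     (rule sum.swap)

lemma sesq_form_axis_left: "sesq_form A (axis i 1) y = (\<Sum>j\<in>UNIV. A $ i $ j * y $ j)"
  unfolding sesq_form_def axis_def
  by (subst sum.swap) (simp add: if_distrib[of cnj] if_distrib[of "\<lambda>c. c * _"] cong: if_cong)

lemma sesq_form_axis_right: "sesq_form A x (axis j 1) = (\<Sum>i\<in>UNIV. cnj (x $ i) * A $ i $ j)"
  unfolding sesq_form_def axis_def by (simp add: if_distrib[of "\<lambda>c. _ * c"] cong: if_cong)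

lemma sesq_form_axis_axis: "sesq_form A (axis i 1) (axis j 1) = A $ i $ j"
  unfolding sesq_form_axis_left by (simp add: axis_def if_distrib[of "\<lambda>c. _ * c"] cong: if_cong)

lemma hermitian_mat_cnj: "hermitian_mat A \<Longrightarrow> cnj (A $ i $ j) = A $ j $ i"
  unfolding hermitian_mat_def by (metis complex_cnj_cnj)

lemma psd_mat_diag_nonneg: "psd_mat A \<Longrightarrow> A $ i $ i \<ge> 0"
  using sesq_form_axis_axis[of A i i] unfolding psd_mat_iff_sesq_form by metis

lemma psd_mat_zero_diag:
  assumes psd: "psd_mat A" and zero: "A $ j $ j = 0"
  shows "A $ i $ j = 0"
proof (rule ccontr)
  assume nz: "A $ i $ j \<noteq> 0"
  define t where "t = - (A $ i $ i + 1) / (2 * A $ i $ j)"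
  define x where "x = axis i 1 + t *s axis j 1"
  have t: "t * A $ i $ j = - (A $ i $ i + 1) / 2"
    using nz by (simp add: t_def field_simps)
  have "sesq_form A x x = A $ i $ i + t * A $ i $ j + cnj (t * A $ i $ j)"
    using zero hermitian_mat_cnj[of A i j] psd
    by (simp add: x_def psd_mat_def sesq_form_add_left sesq_form_add_right sesq_form_scale_left
        sesq_form_scale_right sesq_form_axis_axis algebra_simps)
  then have "Re (sesq_form A x x) = -1"
    by (simp add: t)
  moreover have "sesq_form A x x \<ge> 0"
    using psd by (simp add: psd_mat_iff_sesq_form)
  ultimately show False
    by (simp add: less_eq_complex_def)
qed

text \<open>One Cholesky step: with \<open>v\<close> the \<open>i\<close>-th column scaled by \<open>1 / sqrt (A\<^sub>i\<^sub>i)\<close>, the matrix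
  \<open>A - v v\<^sup>*\<close> is the Schur complement of the pivot \<open>A\<^sub>i\<^sub>i\<close>, padded by a zero row and column.\<close>

lemma psd_mat_minus_outer_prod:
  assumes psd: "psd_mat A" and nz: "A $ i $ i \<noteq> 0"
  obtains v where "psd_mat (A - outer_prod v)" "(A - outer_prod v) $ i $ i = 0"
    "\<And>j. A $ j $ j = 0 \<Longrightarrow> (A - outer_prod v) $ j $ j = 0"
proof -
  have herm: "\<And>k l. cnj (A $ k $ l) = A $ l $ k"
    using psd by (simp add: psd_mat_def hermitian_mat_cnj)
  define a where "a = A $ i $ i"
  define r where "r = Re a"
  have a_real: "a = of_real r" and "r > 0"
    using psd_mat_diag_nonneg[OF psd, of i] nz
    by (auto simp: a_def r_def less_eq_complex_def complex_eq_iff)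
  then have sqrt_sq: "of_real (sqrt r) * of_real (sqrt r) = a" and "a \<noteq> 0"
    by (simp_all flip: of_real_mult)
  define v where "v = (\<chi> k. A $ k $ i / of_real (sqrt r))"
  define A' where "A' = A - outer_prod v"
  have A'_entry: "A' $ k $ l = A $ k $ l - A $ k $ i * A $ i $ l / a" for k l
    using sqrt_sq by (simp add: A'_def v_def outer_prod_def herm)
  have "hermitian_mat A'"
    unfolding hermitian_mat_def A'_entry by (simp add: herm a_real)
  moreover have "sesq_form A' x x \<ge> 0" for x
  proof -
    define w where "w = sesq_form A (axis i 1) x"
    define s where "s = w / a"
    define y where "y = x - s *s axis i 1"
    have "sesq_form A x (axis i 1) = cnj w"
      by (simp add: w_def sesq_form_axis_left sesq_form_axis_right herm mult.commute)
    then have "sesq_form A y y = sesq_form A x x - s * cnj w - cnj s * w + cnj s * s * a"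
      by (simp add: y_def w_def a_def sesq_form_diff_left sesq_form_diff_right sesq_form_scale_left
          sesq_form_scale_right sesq_form_axis_axis algebra_simps)
    also have "\<dots> = sesq_form A x x - cnj w * w / a"
      using \<open>a \<noteq> 0\<close> a_real by (simp add: s_def field_simps)
    also have "cnj w * w / a = sesq_form (outer_prod v) x x"
    proof -
      have "(\<Sum>k\<in>UNIV. cnj (v $ k) * x $ k) = w / of_real (sqrt r)"
        unfolding v_def w_def sesq_form_axis_left by (simp add: herm sum_divide_distrib mult.commute)
      then show ?thesis
        using sqrt_sq by (simp add: sesq_form_outer_prod)
    qed
    finally have "sesq_form A' x x = sesq_form A y y"
      by (simp add: A'_def sesq_form_diff_mat)
    then show ?thesis
      using psd by (simp add: psd_mat_iff_sesq_form)
  qed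
  moreover have "A' $ i $ i = 0"
    using \<open>a \<noteq> 0\<close> by (simp add: A'_entry a_def)
  moreover have "A' $ j $ j = 0" if "A $ j $ j = 0" for j
    using psd_mat_zero_diag[OF psd that, of i] that by (simp add: A'_entry)
  ultimately show ?thesis
    using that unfolding A'_def psd_mat_iff_sesq_form by blast
qed

lemma psd_mat_sum_outer_prod:
  "psd_mat A \<Longrightarrow> \<exists>(w :: nat \<Rightarrow> complex^'n) p. A = (\<Sum>k<p. outer_prod (w k))"
proof (induction "card {i. A $ i $ i \<noteq> 0}" arbitrary: A rule: less_induct)
  case less
  show ?case
  proof (cases "\<exists>i. A $ i $ i \<noteq> 0")
    case False
    then have "A = 0"
      using psd_mat_zero_diag[OF less.prems] by (simp add: vec_eq_iff)
    then show ?thesis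
      by (intro exI[of _ "\<lambda>_. 0"] exI[of _ 0]) simp
  next
    case True
    then obtain i where i: "A $ i $ i \<noteq> 0" ..
    obtain v where v: "psd_mat (A - outer_prod v)" "(A - outer_prod v) $ i $ i = 0"
      "\<And>j. A $ j $ j = 0 \<Longrightarrow> (A - outer_prod v) $ j $ j = 0"
      using psd_mat_minus_outer_prod[OF less.prems i] by blast
    have "{j. (A - outer_prod v) $ j $ j \<noteq> 0} \<subseteq> {j. A $ j $ j \<noteq> 0} - {i}"
      using v by auto
    moreover have "card ({j. A $ j $ j \<noteq> 0} - {i}) < card {j. A $ j $ j \<noteq> 0}"
      using i by (intro card_Diff1_less) auto
    ultimately have "card {j. (A - outer_prod v) $ j $ j \<noteq> 0} < card {j. A $ j $ j \<noteq> 0}"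
      by (meson card_mono finite le_less_trans)
    then obtain w and p :: nat where "A - outer_prod v = (\<Sum>k<p. outer_prod (w k))"
      using less.hyps[OF _ v(1)] by blast
    then have "A = (\<Sum>k<Suc p. outer_prod ((w(p := v)) k))"
      by (simp add: algebra_simps)
    then show ?thesis
      by blast
  qed
qed

theorem mainTheorem5:
  fixes A B C :: "complex ^'n ^'n"
  assumes "psd_mat A" and "psd_mat B" and "psd_mat C"
  shows "det (A + B + C) + det C \<ge> det (A + C) + det (B + C)"
proof -
  obtain a b c and p q r :: nat where
    A: "A = (\<Sum>k<p. outer_prod (a k))" and B: "B = (\<Sum>k<q. outer_prod (b k))" and
    C: "C = (\<Sum>k<r. outer_prod (c k))"
    using psd_mat_sum_outer_prod assms by metis
  define w :: "nat + nat + nat \<Rightarrow> complex^'n" where "w = case_sum a (case_sum b c)"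
  define G where "G K = (\<Sum>k\<in>K. outer_prod (w k))" for K
  define KA KB KC :: "(nat + nat + nat) set"
    where "KA = Inl ` {..<p}" and "KB = Inr ` Inl ` {..<q}" and "KC = Inr ` Inr ` {..<r}"
  have G_parts: "G KA = A" "G KB = B" "G KC = C"
    by (simp_all add: G_def KA_def KB_def KC_def A B C w_def sum.reindex)
  have fin: "finite KA" "finite KB" "finite KC"
    and disj: "KA \<inter> KB = {}" "KA \<inter> KC = {}" "KB \<inter> KC = {}"
    by (auto simp: KA_def KB_def KC_def)
  have G_Un: "G (X \<union> Y) = G X + G Y" if "finite X" "finite Y" "X \<inter> Y = {}" for X Y
    unfolding G_def using that by (rule sum.union_disjoint)
  have "(KA \<union> KC) \<inter> (KB \<union> KC) = KC" and "(KA \<union> KC) \<union> (KB \<union> KC) = KA \<union> KB \<union> KC"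
    using disj by auto
  with det_sum_outer_prod_supermodular[of "KA \<union> KC" "KB \<union> KC" w] show ?thesis
    using fin disj by (simp add: G_def[symmetric] G_parts G_Un Int_Un_distrib2 add_ac)
qed

end
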